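(* Let $\mathbf a:\mathbb R\to L^2(\mathbb R)$, $\mathbf a(\theta)(s)=\pi^{-1/4}e^{-\frac12(s-\theta)^2}$. Let $\theta_1\ne\theta_2$ be real, $c_1,c_2>0$, and $\mathbf y=c_1\mathbf a(\theta_1)+c_2\mathbf a(\theta_2)$. Then no maximizer of $\theta\mapsto|\langle\mathbf a(\theta),\mathbf y\rangle|$ over $\mathbb R$ belongs to $\{\theta_1,\theta_2\}$; in particular the first OMP iteration with input $\mathbf y$ selects a parameter outside $\{\theta_1,\theta_2\}$.
   Context: $\langle\cdot,\cdot\rangle$ is the $L^2(\mathbb R)$ inner product. The first OMP iteration with input $\mathbf y$ selects some $\widehat\theta_1\in\arg\max_\theta|\langle\mathbf a(\theta),\mathbf y\rangle|$. *)

theory Defs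
  imports "HOL-Analysis.Analysis"
begin

definition atom :: "real \<Rightarrow> real \<Rightarrow> real" where
  "atom \<theta> s = pi powr (-1/4) * exp (-(1/2) * (s - \<theta>)^2)"

definition l2_inner :: "(real \<Rightarrow> real) \<Rightarrow> (real \<Rightarrow> real) \<Rightarrow> real" where
  "l2_inner f g = (LINT s|lborel. f s * g s)"

end

theory Submission imports Defs "HOL-Probability.Distributions" begin

text \<open>The correlation of two Gaussian atoms is the Gaussian kernel
  \<open>exp (-(\<phi> - \<theta>)\<^sup>2/4)\<close> in the distance of their centres, so
  \<open>\<theta> \<mapsto> \<langle>a(\<theta>), y\<rangle>\<close> is a positive combination of two such kernels centred at \<open>\<theta>1\<close>
  and \<open>\<theta>2\<close>. At \<open>\<theta>1\<close> the first kernel is stationary while the second has nonzero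
  slope, so the derivative there is nonzero and \<open>\<theta>1\<close> cannot be a maximiser.\<close>

lemma atom_mult_atom:
  "atom \<phi> s * atom \<theta> s = exp (-(\<phi> - \<theta>)\<^sup>2/4) * normal_density ((\<phi> + \<theta>)/2) (sqrt (1/2)) s"
proof -
  have pi_factor: "pi powr (-1/4) * pi powr (-1/4) = 1 / sqrt pi"
    by (simp add: powr_add[symmetric] powr_minus_divide powr_half_sqrt)
  have "-(1/2) * (s - \<phi>)\<^sup>2 + -(1/2) * (s - \<theta>)\<^sup>2 = -(\<phi> - \<theta>)\<^sup>2/4 + -(s - (\<phi> + \<theta>)/2)\<^sup>2"
    by (simp add: power2_eq_square field_simps)
  then have exp_factor: "exp (-(1/2) * (s - \<phi>)\<^sup>2) * exp (-(1/2) * (s - \<theta>)\<^sup>2)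
      = exp (-(\<phi> - \<theta>)\<^sup>2/4) * exp (-(s - (\<phi> + \<theta>)/2)\<^sup>2)"
    by (metis exp_add)
  have "atom \<phi> s * atom \<theta> s
      = (pi powr (-1/4) * pi powr (-1/4)) * (exp (-(1/2) * (s - \<phi>)\<^sup>2) * exp (-(1/2) * (s - \<theta>)\<^sup>2))"
    unfolding atom_def by (simp only: ac_simps)
  also have "\<dots> = exp (-(\<phi> - \<theta>)\<^sup>2/4) * (1 / sqrt pi * exp (-(s - (\<phi> + \<theta>)/2)\<^sup>2))"
    unfolding pi_factor exp_factor by simp
  finally show ?thesis by (simp add: normal_density_def)
qed

lemma integrable_atom_mult_atom: "integrable lborel (\<lambda>s. atom \<phi> s * atom \<theta> s)"
  unfolding atom_mult_atom by simp

lemma l2_inner_atom_atom: "l2_inner (atom \<phi>) (atom \<theta>) = exp (-(\<phi> - \<theta>)\<^sup>2/4)"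
  unfolding l2_inner_def atom_mult_atom by simp

lemma l2_inner_atom_combination:
  "l2_inner (atom \<phi>) (\<lambda>s. c1 * atom \<theta>1 s + c2 * atom \<theta>2 s)
     = c1 * exp (-(\<phi> - \<theta>1)\<^sup>2/4) + c2 * exp (-(\<phi> - \<theta>2)\<^sup>2/4)"
proof -
  have "l2_inner (atom \<phi>) (\<lambda>s. c1 * atom \<theta>1 s + c2 * atom \<theta>2 s)
      = (LINT s|lborel. c1 * (atom \<phi> s * atom \<theta>1 s) + c2 * (atom \<phi> s * atom \<theta>2 s))"
    unfolding l2_inner_def by (simp add: algebra_simps)
  also have "\<dots> = c1 * l2_inner (atom \<phi>) (atom \<theta>1) + c2 * l2_inner (atom \<phi>) (atom \<theta>2)"
    unfolding l2_inner_def
    by (simp add: integrable_atom_mult_atom Bochner_Integration.integral_add)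
  finally show ?thesis by (simp add: l2_inner_atom_atom)
qed

lemma gaussian_pair_not_max_at_centre:
  fixes a b ca cb :: real
  assumes "a \<noteq> b" "ca > 0" "cb > 0"
  shows "\<not> (\<forall>\<phi>. ca * exp (-(\<phi> - a)\<^sup>2/4) + cb * exp (-(\<phi> - b)\<^sup>2/4) \<le> ca + cb * exp (-(a - b)\<^sup>2/4))"
proof
  define g where "g \<phi> = ca * exp (-(\<phi> - a)\<^sup>2/4) + cb * exp (-(\<phi> - b)\<^sup>2/4)" for \<phi>
  assume "\<forall>\<phi>. g \<phi> \<le> ca + cb * exp (-(a - b)\<^sup>2/4)"
  then have local_max: "\<forall>\<phi>. \<bar>a - \<phi>\<bar> < 1 \<longrightarrow> g \<phi> \<le> g a"
    by (simp add: g_def)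
  have "(g has_real_derivative cb * exp (-(a - b)\<^sup>2/4) * (-(a - b) / 2)) (at a)"
    unfolding g_def by (auto intro!: derivative_eq_intros simp: power2_eq_square field_simps)
  from DERIV_local_max[OF this zero_less_one local_max]
  show False using assms by simp
qed

theorem mainTheorem15:
  fixes \<theta>1 \<theta>2 c1 c2 :: real and y :: "real \<Rightarrow> real"
  assumes "\<theta>1 \<noteq> \<theta>2" and "c1 > 0" and "c2 > 0"
    and "y = (\<lambda>s. c1 * atom \<theta>1 s + c2 * atom \<theta>2 s)"
  shows "\<forall>\<theta>. (\<forall>\<phi>. \<bar>l2_inner (atom \<phi>) y\<bar> \<le> \<bar>l2_inner (atom \<theta>) y\<bar>)
              \<longrightarrow> \<theta> \<notin> {\<theta>1, \<theta>2}"
proof (intro allI impI)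
  fix \<theta> assume max: "\<forall>\<phi>. \<bar>l2_inner (atom \<phi>) y\<bar> \<le> \<bar>l2_inner (atom \<theta>) y\<bar>"
  have correlation: "\<bar>l2_inner (atom \<phi>) y\<bar> = c1 * exp (-(\<phi> - \<theta>1)\<^sup>2/4) + c2 * exp (-(\<phi> - \<theta>2)\<^sup>2/4)" for \<phi>
    using assms(2,3) by (simp add: assms(4) l2_inner_atom_combination)
  have "\<theta> \<noteq> \<theta>1"
    using max gaussian_pair_not_max_at_centre[OF assms(1-3)] by (auto simp: correlation)
  moreover have "\<theta> \<noteq> \<theta>2"
    using max gaussian_pair_not_max_at_centre[OF assms(1)[symmetric] assms(3,2)]
    by (auto simp: correlation power2_commute add.commute)
  ultimately show "\<theta> \<notin> {\<theta>1, \<theta>2}" by simp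
qed

end
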